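(* Let $f:[0,1]\to[0,1]$ be a surjective continuous function that does not admit a splitting sequence. If $f$ admits two distinct 2-cycles $\{s,t\}$ and $\{u,v\}$ with $s<t$ and $u<v$, then either $s<u<v<t$ or $u<s<t<v$.
   Context: A 2-cycle is a set $\{s,t\}$ with $s\ne t$, $f(s)=t$, $f(t)=s$. A sequence $(T_n)_{n\in\mathbb N}$ of closed intervals $T_n\subsetneq[0,1]$ (possibly degenerate) is tight if $f(T_{n+1})=T_n$ for every $n$ and $T_n$ is nondegenerate for all sufficiently large $n$. A tight sequence $(T_n)$, $T_n=[l_n,r_n]$, is a splitting sequence admitted by $f$ if there are an infinite set $N\subseteq\mathbb N$ and nondegenerate closed intervals $S_n\subseteq[0,1]$ ($n\in N$) with $S_n\cap T_n\subseteq\{l_n,r_n\}$ and $f(S_n)=f(T_n)$ for all $n\in N$. *)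

theory Defs
  imports "HOL-Analysis.Analysis"
begin

definition two_cycle :: "(real \<Rightarrow> real) \<Rightarrow> real \<Rightarrow> real \<Rightarrow> bool" where
  "two_cycle f s t \<longleftrightarrow> s \<in> {0..1} \<and> t \<in> {0..1} \<and> s \<noteq> t \<and> f s = t \<and> f t = s"

definition tight_seq :: "(real \<Rightarrow> real) \<Rightarrow> (nat \<Rightarrow> real) \<Rightarrow> (nat \<Rightarrow> real) \<Rightarrow> bool" where
  "tight_seq f l r \<longleftrightarrow>
     (\<forall>n. l n \<le> r n \<and> {l n..r n} \<subset> {0..1}) \<and>
     (\<forall>n. f ` {l (Suc n)..r (Suc n)} = {l n..r n}) \<and>
     (\<exists>m. \<forall>n\<ge>m. l n < r n)"

definition splitting_seq :: "(real \<Rightarrow> real) \<Rightarrow> (nat \<Rightarrow> real) \<Rightarrow> (nat \<Rightarrow> real) \<Rightarrow> bool" where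
  "splitting_seq f l r \<longleftrightarrow> tight_seq f l r \<and>
     (\<exists>N :: nat set. infinite N \<and>
        (\<forall>n\<in>N. \<exists>a b. a < b \<and> {a..b} \<subseteq> {0..1} \<and>
            {a..b} \<inter> {l n..r n} \<subseteq> {l n, r n} \<and>
            f ` {a..b} = f ` {l n..r n}))"

definition admits_splitting_seq :: "(real \<Rightarrow> real) \<Rightarrow> bool" where
  "admits_splitting_seq f \<longleftrightarrow> (\<exists>l r. splitting_seq f l r)"

end

theory Submission
  imports Defs
begin

text \<open>
  Two 2-cycles that are not nested are either disjoint or interlaced. In both cases there is a
  family of proper subintervals each of which is the \<open>f\<close>-image both of another member of the
  family and of an interval touching that member at most in an endpoint: for \<open>s < t < u < v\<close>
  the subintervals of \<open>[s, t]\<close>, covered by \<open>[s, t]\<close> itself and by \<open>[t, u]\<close>; for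
  \<open>s < u < t < v\<close> the subintervals of \<open>[s, u]\<close> and \<open>[t, v]\<close>, which cover each other and are
  both covered by \<open>[u, t]\<close>. Pulling back along the family, with intervals cut out by the
  intermediate value theorem so that their image is exact, yields a splitting sequence.
\<close>

lemma Icc_subset_continuous_image:
  fixes f :: "real \<Rightarrow> real"
  assumes "continuous_on {p..q} f" and "x \<in> {p..q}" and "y \<in> {p..q}"
  shows "{f x..f y} \<subseteq> f ` {p..q}"
proof -
  have "is_interval (f ` {p..q})"
    using connected_continuous_image[OF assms(1)] is_interval_connected_1 by auto
  then show ?thesis
    using assms(2,3) by (auto simp: is_interval_1 intro: image_eqI)
qed

lemma subinterval_image_eq_Icc_increasing:
  fixes f :: "real \<Rightarrow> real"
  assumes cont: "continuous_on {x..y} f" and "x \<le> y" and fx: "f x = c" and fy: "f y = d"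
    and "c \<le> d"
  shows "\<exists>a b. x \<le> a \<and> a \<le> b \<and> b \<le> y \<and> f ` {a..b} = {c..d}"
proof -
  text \<open>Take \<open>a\<close> the last point of \<open>[x, y]\<close> with value \<open>c\<close> and \<open>b\<close> the first point of
    \<open>[a, y]\<close> with value \<open>d\<close>; by the intermediate value theorem \<open>f\<close> stays in \<open>[c, d]\<close> between.\<close>
  define A where "A = {z \<in> {x..y}. f z = c}"
  have "closed A" unfolding A_def
    by (rule continuous_closed_preimage_constant[OF cont]) simp
  moreover have "A \<noteq> {}" "bdd_above A"
    using \<open>x \<le> y\<close> fx unfolding A_def by (auto intro: bdd_aboveI[of _ y])
  ultimately have a: "Sup A \<in> A" and a_max: "\<And>z. z \<in> A \<Longrightarrow> z \<le> Sup A"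
    by (auto intro: closed_contains_Sup cSup_upper)
  define a where "a = Sup A"
  define B where "B = {z \<in> {a..y}. f z = d}"
  have "continuous_on {a..y} f"
    using a unfolding A_def a_def by (auto intro: continuous_on_subset[OF cont])
  then have "closed B" unfolding B_def
    by (rule continuous_closed_preimage_constant) simp
  moreover have "B \<noteq> {}" "bdd_below B"
    using a fy unfolding A_def B_def a_def by (auto intro: bdd_belowI[of _ a])
  ultimately have b: "Inf B \<in> B" and b_min: "\<And>z. z \<in> B \<Longrightarrow> Inf B \<le> z"
    by (auto intro: closed_contains_Inf cInf_lower)
  define b where "b = Inf B"
  have ab: "x \<le> a" "a \<le> b" "b \<le> y" and fa: "f a = c" and fb: "f b = d"
    using a b unfolding A_def B_def a_def b_def by auto
  have cont_ab: "continuous_on {p..q} f" if "a \<le> p" "q \<le> b" for p q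
    using ab that by (auto intro: continuous_on_subset[OF cont])
  have "f ` {a..b} \<subseteq> {c..d}"
  proof (rule image_subsetI)
    fix z assume "z \<in> {a..b}"
    then have z: "a \<le> z" "z \<le> b" by auto
    have "c \<le> f z"
    proof (rule ccontr)
      assume "\<not> c \<le> f z"
      then obtain w where w: "z \<le> w" "w \<le> b" "f w = c"
        using IVT'[of f z c b] fb \<open>c \<le> d\<close> z cont_ab[of z b] by auto
      then have "w \<in> A" using z ab unfolding A_def by auto
      then have "w \<le> a" unfolding a_def by (rule a_max)
      then have "w = z" using w z by linarith
      then show False using w \<open>\<not> c \<le> f z\<close> by simp
    qed
    moreover have "f z \<le> d"
    proof (rule ccontr)
      assume "\<not> f z \<le> d"
      then obtain w where w: "a \<le> w" "w \<le> z" "f w = d"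
        using IVT'[of f a d z] fa \<open>c \<le> d\<close> z cont_ab[of a z] by auto
      then have "w \<in> B" using z ab unfolding B_def by auto
      then have "b \<le> w" unfolding b_def by (rule b_min)
      then have "w = z" using w z by linarith
      then show False using w \<open>\<not> f z \<le> d\<close> by simp
    qed
    ultimately show "f z \<in> {c..d}" by simp
  qed
  moreover have "{c..d} \<subseteq> f ` {a..b}"
    using Icc_subset_continuous_image[OF cont_ab[OF order_refl order_refl], of a b] ab fa fb
    by simp
  ultimately have "f ` {a..b} = {c..d}" by (rule subset_antisym)
  with ab show ?thesis by blast
qed

lemma subinterval_image_eq_Icc:
  fixes f :: "real \<Rightarrow> real"
  assumes cont: "continuous_on {p..q} f" and "c < d" and sub: "{c..d} \<subseteq> f ` {p..q}"
  shows "\<exists>a b. p \<le> a \<and> a < b \<and> b \<le> q \<and> f ` {a..b} = {c..d}"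
proof -
  have "c \<in> f ` {p..q}" "d \<in> f ` {p..q}"
    using sub \<open>c < d\<close> by auto
  then obtain x y where x: "x \<in> {p..q}" "f x = c" and y: "y \<in> {p..q}" "f y = d"
    by blast
  have "\<exists>a b. p \<le> a \<and> a \<le> b \<and> b \<le> q \<and> f ` {a..b} = {c..d}"
  proof (cases "x \<le> y")
    case True
    have "continuous_on {x..y} f" using x y by (auto intro: continuous_on_subset[OF cont])
    from subinterval_image_eq_Icc_increasing[OF this True x(2) y(2)] \<open>c < d\<close>
    obtain a b where "x \<le> a" "a \<le> b" "b \<le> y" "f ` {a..b} = {c..d}"
      by auto
    then show ?thesis using x y by (intro exI[of _ a] exI[of _ b]) auto
  next
    case False
    have "continuous_on {y..x} (\<lambda>z. - f z)"
      using x y False by (auto intro!: continuous_intros intro: continuous_on_subset[OF cont])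
    from subinterval_image_eq_Icc_increasing[OF this _ _ _, of "-d" "-c"] x y \<open>c < d\<close> False
    obtain a b where ab: "y \<le> a" "a \<le> b" "b \<le> x" "(\<lambda>z. - f z) ` {a..b} = {-d..-c}"
      by auto
    have "f ` {a..b} = uminus ` ((\<lambda>z. - f z) ` {a..b})" by (simp add: image_image)
    also have "\<dots> = {c..d}" using ab(4) by simp
    finally show ?thesis using ab x y by (intro exI[of _ a] exI[of _ b]) auto
  qed
  then obtain a b where ab: "p \<le> a" "a \<le> b" "b \<le> q" "f ` {a..b} = {c..d}" by blast
  moreover have "a \<noteq> b"
  proof
    assume "a = b"
    then have "{c..d} = {f a}" using ab(4) by simp
    then show False using \<open>c < d\<close> by (simp add: atLeastAtMost_singleton_iff)
  qed
  ultimately show ?thesis by (intro exI[of _ a] exI[of _ b]) auto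
qed

definition splits_onto :: "(real \<Rightarrow> real) \<Rightarrow> real \<Rightarrow> real \<Rightarrow> real \<Rightarrow> real \<Rightarrow> bool" where
  "splits_onto f a b c d \<longleftrightarrow> f ` {a..b} = {c..d} \<and>
     (\<exists>e g. e < g \<and> {e..g} \<subseteq> {0..1} \<and> {e..g} \<inter> {a..b} \<subseteq> {a, b} \<and> f ` {e..g} = {c..d})"

lemma admits_splitting_seqI:
  fixes f :: "real \<Rightarrow> real" and K :: "(real \<times> real) set"
  assumes "K \<noteq> {}"
    and proper: "\<And>c d. (c, d) \<in> K \<Longrightarrow> c < d \<and> {c..d} \<subset> {0..1}"
    and lift: "\<And>c d. (c, d) \<in> K \<Longrightarrow> \<exists>a b. (a, b) \<in> K \<and> splits_onto f a b c d"
  shows "admits_splitting_seq f"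
proof -
  have "\<exists>X. \<forall>n. X n \<in> K \<and> splits_onto f (fst (X (Suc n))) (snd (X (Suc n))) (fst (X n)) (snd (X n))"
  proof (rule dependent_nat_choice)
    show "\<exists>x. x \<in> K" using \<open>K \<noteq> {}\<close> by blast
    fix x assume "x \<in> K"
    then obtain a b where "(a, b) \<in> K" "splits_onto f a b (fst x) (snd x)"
      using lift[of "fst x" "snd x"] by auto
    then show "\<exists>y. y \<in> K \<and> splits_onto f (fst y) (snd y) (fst x) (snd x)"
      by (intro exI[of _ "(a, b)"]) simp
  qed
  then obtain X where X: "\<And>n. X n \<in> K \<and> splits_onto f (fst (X (Suc n))) (snd (X (Suc n))) (fst (X n)) (snd (X n))"
    by blast
  define l where "l = fst \<circ> X"
  define r where "r = snd \<circ> X"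
  have lr: "l n < r n \<and> {l n..r n} \<subset> {0..1}" for n
    using proper[of "l n" "r n"] X[of n] unfolding l_def r_def by simp
  have lift_lr: "splits_onto f (l (Suc n)) (r (Suc n)) (l n) (r n)" for n
    using X[of n] unfolding l_def r_def by simp
  have "tight_seq f l r"
    unfolding tight_seq_def
  proof (intro conjI allI)
    show "l n \<le> r n" "{l n..r n} \<subset> {0..1}" for n
      using lr[of n] by simp_all
    show "\<exists>m. \<forall>n\<ge>m. l n < r n"
      using lr by blast
    show "f ` {l (Suc n)..r (Suc n)} = {l n..r n}" for n
      using lift_lr[of n] by (simp add: splits_onto_def)
  qed
  moreover have "infinite (range Suc)"
    by (rule range_inj_infinite) simp
  moreover have "\<forall>n\<in>range Suc. \<exists>a b. a < b \<and> {a..b} \<subseteq> {0..1} \<and>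
      {a..b} \<inter> {l n..r n} \<subseteq> {l n, r n} \<and> f ` {a..b} = f ` {l n..r n}"
    using lift_lr by (auto simp: splits_onto_def)
  ultimately show ?thesis
    unfolding admits_splitting_seq_def splitting_seq_def by blast
qed

lemma admits_splitting_seq_if_covering_intervals:
  fixes f :: "real \<Rightarrow> real" and \<A> :: "(real \<times> real) set"
  assumes cont: "continuous_on {0..1} f" and "\<A> \<noteq> {}"
    and proper: "\<And>p q. (p, q) \<in> \<A> \<Longrightarrow> p < q \<and> {p..q} \<subset> {0..1}"
    and cover: "\<And>p q. (p, q) \<in> \<A> \<Longrightarrow> \<exists>(p', q') \<in> \<A>. {p..q} \<subseteq> f ` {p'..q'}"
    and "{e..g} \<subseteq> {0..1}"
    and cover_gap: "\<And>p q. (p, q) \<in> \<A> \<Longrightarrow> {p..q} \<subseteq> f ` {e..g}"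
    and gap: "\<And>p q. (p, q) \<in> \<A> \<Longrightarrow> q \<le> e \<or> g \<le> p"
  shows "admits_splitting_seq f"
proof (rule admits_splitting_seqI)
  let ?K = "{(c, d). c < d \<and> (\<exists>(p, q) \<in> \<A>. p \<le> c \<and> d \<le> q)}"
  obtain p q where "(p, q) \<in> \<A>"
    using \<open>\<A> \<noteq> {}\<close> by auto
  then have "(p, q) \<in> ?K"
    using proper by auto
  then show "?K \<noteq> {}" by blast
  show "c < d \<and> {c..d} \<subset> {0..1}" if cd: "(c, d) \<in> ?K" for c d
  proof -
    obtain p q where "(p, q) \<in> \<A>" "p \<le> c" "c < d" "d \<le> q"
      using cd by auto
    then show ?thesis
      using proper[of p q] by (auto intro: subset_psubset_trans)
  qed
  show "\<exists>a b. (a, b) \<in> ?K \<and> splits_onto f a b c d" if cd: "(c, d) \<in> ?K" for c d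
  proof -
    obtain p q where pq: "(p, q) \<in> \<A>" "p \<le> c" "d \<le> q" and "c < d"
      using cd by auto
    obtain p' q' where pq': "(p', q') \<in> \<A>" "{p..q} \<subseteq> f ` {p'..q'}"
      using cover[OF pq(1)] by auto
    have cd_sub: "{c..d} \<subseteq> {p..q}"
      using pq by auto
    have "continuous_on {p'..q'} f"
      using proper[OF pq'(1)] by (auto intro: continuous_on_subset[OF cont])
    then obtain a b where ab: "p' \<le> a" "a < b" "b \<le> q'" "f ` {a..b} = {c..d}"
      using subinterval_image_eq_Icc \<open>c < d\<close> subset_trans[OF cd_sub pq'(2)] by blast
    have "continuous_on {e..g} f"
      using \<open>{e..g} \<subseteq> {0..1}\<close> by (rule continuous_on_subset[OF cont])
    then obtain e' g' where eg: "e \<le> e'" "e' < g'" "g' \<le> g" "f ` {e'..g'} = {c..d}"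
      using subinterval_image_eq_Icc \<open>c < d\<close> subset_trans[OF cd_sub cover_gap[OF pq(1)]] by blast
    have "{e'..g'} \<inter> {a..b} \<subseteq> {a, b}"
      using gap[OF pq'(1)] ab eg by auto
    moreover have "{e'..g'} \<subseteq> {0..1}"
      using \<open>{e..g} \<subseteq> {0..1}\<close> eg by auto
    moreover have "(a, b) \<in> ?K"
      using pq'(1) ab by auto
    ultimately show ?thesis
      using ab eg unfolding splits_onto_def by blast
  qed
qed

lemma admits_splitting_seq_if_two_cycles_not_nested:
  fixes f :: "real \<Rightarrow> real"
  assumes cont: "continuous_on {0..1} f"
    and "two_cycle f s t" "two_cycle f u v" "s < t" "u < v" "s < u" "t < v"
  shows "admits_splitting_seq f"
proof -
  have f: "f s = t" "f t = s" "f u = v" "f v = u" and "0 \<le> s" "v \<le> 1"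
    using assms(2,3) unfolding two_cycle_def by auto
  have cover: "{f x..f y} \<subseteq> f ` {p..q}"
    if "0 \<le> p" "q \<le> 1" "x \<in> {p..q}" "y \<in> {p..q}" for p q x y
    using that by (intro Icc_subset_continuous_image continuous_on_subset[OF cont]) auto
  have "t \<noteq> u"
    using f \<open>s < u\<close> \<open>u < v\<close> by auto
  then consider "t < u" | "u < t" by linarith
  then show ?thesis
  proof cases
    case 1
    have self_cover: "{s..t} \<subseteq> f ` {s..t}"
      using cover[of s t t s] f \<open>0 \<le> s\<close> \<open>s < t\<close> 1 \<open>u < v\<close> \<open>v \<le> 1\<close> by simp
    have gap_cover: "{s..t} \<subseteq> f ` {t..u}"
      using cover[of t u t u] f \<open>0 \<le> s\<close> \<open>s < t\<close> 1 \<open>t < v\<close> \<open>u < v\<close> \<open>v \<le> 1\<close> by auto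
    show ?thesis
    proof (intro admits_splitting_seq_if_covering_intervals[OF cont, of "{(s, t)}" t u])
      show "{t..u} \<subseteq> {0..1}"
        using \<open>0 \<le> s\<close> \<open>s < t\<close> \<open>u < v\<close> \<open>v \<le> 1\<close> by auto
      show "p < q \<and> {p..q} \<subset> {0..1}" if "(p, q) \<in> {(s, t)}" for p q
        using that \<open>0 \<le> s\<close> \<open>s < t\<close> 1 \<open>u < v\<close> \<open>v \<le> 1\<close> by (auto simp: Icc_eq_Icc)
      show "\<exists>(p', q') \<in> {(s, t)}. {p..q} \<subseteq> f ` {p'..q'}" if "(p, q) \<in> {(s, t)}" for p q
        using that self_cover by simp
      show "{p..q} \<subseteq> f ` {t..u}" if "(p, q) \<in> {(s, t)}" for p q
        using that gap_cover by simp
      show "q \<le> t \<or> u \<le> p" if "(p, q) \<in> {(s, t)}" for p q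
        using that by simp
    qed simp
  next
    case 2
    have gap_cover: "{s..v} \<subseteq> f ` {u..t}"
      using cover[of u t t u] f 2 \<open>0 \<le> s\<close> \<open>s < u\<close> \<open>t < v\<close> \<open>v \<le> 1\<close> by simp
    have cross_cover: "{s..u} \<subseteq> f ` {t..v}" "{t..v} \<subseteq> f ` {s..u}"
      using cover[of t v t v] cover[of s u s u] f 2 \<open>0 \<le> s\<close> \<open>s < u\<close> \<open>t < v\<close> \<open>v \<le> 1\<close>
      by simp_all
    show ?thesis
    proof (intro admits_splitting_seq_if_covering_intervals[OF cont, of "{(s, u), (t, v)}" u t])
      show "{u..t} \<subseteq> {0..1}"
        using \<open>0 \<le> s\<close> \<open>s < u\<close> \<open>t < v\<close> \<open>v \<le> 1\<close> by auto
      show "p < q \<and> {p..q} \<subset> {0..1}" if "(p, q) \<in> {(s, u), (t, v)}" for p q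
        using that \<open>0 \<le> s\<close> \<open>s < u\<close> 2 \<open>t < v\<close> \<open>u < v\<close> \<open>v \<le> 1\<close> by (auto simp: Icc_eq_Icc)
      show "{p..q} \<subseteq> f ` {u..t}" if "(p, q) \<in> {(s, u), (t, v)}" for p q
        using that gap_cover 2 \<open>s < u\<close> \<open>t < v\<close> by auto
      show "\<exists>(p', q') \<in> {(s, u), (t, v)}. {p..q} \<subseteq> f ` {p'..q'}"
        if "(p, q) \<in> {(s, u), (t, v)}" for p q
        using that cross_cover by blast
      show "q \<le> u \<or> t \<le> p" if "(p, q) \<in> {(s, u), (t, v)}" for p q
        using that by auto
    qed simp
  qed
qed

theorem lemma3p13:
  fixes f :: "real \<Rightarrow> real" and s t u v :: real
  assumes "continuous_on {0..1} f" and "f ` {0..1} = {0..1}"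
    and "\<not> admits_splitting_seq f"
    and "two_cycle f s t" and "two_cycle f u v"
    and "s < t" and "u < v" and "(s, t) \<noteq> (u, v)"
  shows "(s < u \<and> u < v \<and> v < t) \<or> (u < s \<and> s < t \<and> t < v)"
proof -
  have f: "f s = t" "f t = s" "f u = v" "f v = u"
    using assms(4,5) unfolding two_cycle_def by auto
  have "s \<noteq> u"
    using f assms(8) by auto
  then consider "s < u" | "u < s" by linarith
  then show ?thesis
  proof cases
    case 1
    have "\<not> t < v"
      using admits_splitting_seq_if_two_cycles_not_nested[OF assms(1,4,5,6,7) 1] assms(3) by blast
    moreover have "t \<noteq> v"
      using f 1 by auto
    ultimately show ?thesis
      using 1 assms(7) by auto
  next
    case 2
    have "\<not> v < t"
      using admits_splitting_seq_if_two_cycles_not_nested[OF assms(1,5,4,7,6) 2] assms(3) by blast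
    moreover have "t \<noteq> v"
      using f 2 by auto
    ultimately show ?thesis
      using 2 assms(6) by auto
  qed
qed

end
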